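(* Let $A$ be a transferable wqo and $B$ any wqo. Then $\mathbf{w}(A\times B)\ge \mathbf{w}(A)\cdot \mathbf{o}(B)$.
   Context: A wqo is a quasi-order with no infinite bad sequence (a sequence $x_0,x_1,\dots$ is bad if there are no $i<j$ with $x_i\le x_j$). For a wqo, $\mathbf{w}(A)$ (width) is the rank of the forest of nonempty finite sequences of pairwise incomparable elements ordered by initial segment, and $\mathbf{o}(A)$ (maximal order type) is the rank of the forest of nonempty finite bad sequences ordered by initial segment (rank: $r(s)=\sup\{r(t)+1:t$ child of $s\}$, invariant $=\sup_s(r(s)+1)$); equivalently $\mathbf{o}(A)$ is the largest order type of a linear extension of $A$. $A_{\not\le Y}=\{y\in A: y\not\le x \text{ for all } x\in Y\}$. $A$ is transferable if $\mathbf{w}(A_{\not\le Y})=\mathbf{w}(A)$ for every finite $Y\subseteq A$. $A\times B$ has the componentwise order; $\cdot$ is ordinary ordinal multiplication. *)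

theory Defs
  imports Main
begin

definition qo_on :: "'a set \<Rightarrow> ('a \<Rightarrow> 'a \<Rightarrow> bool) \<Rightarrow> bool" where
  "qo_on A le \<longleftrightarrow> (\<forall>x\<in>A. le x x) \<and>
     (\<forall>x\<in>A. \<forall>y\<in>A. \<forall>z\<in>A. le x y \<longrightarrow> le y z \<longrightarrow> le x z)"

definition wqo_on :: "'a set \<Rightarrow> ('a \<Rightarrow> 'a \<Rightarrow> bool) \<Rightarrow> bool" where
  "wqo_on A le \<longleftrightarrow> qo_on A le \<and>
     (\<forall>f::nat \<Rightarrow> 'a. (\<forall>i. f i \<in> A) \<longrightarrow> (\<exists>i j. i < j \<and> le (f i) (f j)))"

text \<open>A forest is given by a node set N and a child relation ch (ch s t: t is a child of s).
  The rank is r(s) = sup{r(t)+1 : t child of s}.  We encode the comparison r(s) \<le> r(t)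
  by its recursive characterisation: r(s) \<le> r(t) iff every child s' of s has a child
  t' of t with r(s') \<le> r(t').\<close>

inductive rank_le :: "'n set \<Rightarrow> ('n \<Rightarrow> 'n \<Rightarrow> bool) \<Rightarrow> 'n \<Rightarrow> 'n \<Rightarrow> bool"
  for N ch where
  "s \<in> N \<Longrightarrow> t \<in> N \<Longrightarrow>
   (\<forall>s'. s' \<in> N \<and> ch s s' \<longrightarrow> (\<exists>t'. t' \<in> N \<and> ch t t' \<and> rank_le N ch s' t'))
   \<Longrightarrow> rank_le N ch s t"

definition rank_classes :: "'n set \<Rightarrow> ('n \<Rightarrow> 'n \<Rightarrow> bool) \<Rightarrow> 'n set set" where
  "rank_classes N ch = {{t \<in> N. rank_le N ch s t \<and> rank_le N ch t s} | s. s \<in> N}"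

text \<open>The invariant sup_s (r(s)+1) of the forest is the order type of the set of ranks
  {r(s) : s \<in> N} (an initial segment of the ordinals); we represent it as the
  well-order on the classes of nodes of equal rank, ordered by rank.\<close>

definition forest_inv :: "'n set \<Rightarrow> ('n \<Rightarrow> 'n \<Rightarrow> bool) \<Rightarrow> 'n set rel" where
  "forest_inv N ch = {(C, D). C \<in> rank_classes N ch \<and> D \<in> rank_classes N ch \<and>
      (\<exists>s\<in>C. \<exists>t\<in>D. rank_le N ch s t)}"

definition extends1 :: "'a list \<Rightarrow> 'a list \<Rightarrow> bool" where
  "extends1 s t \<longleftrightarrow> (\<exists>x. t = s @ [x])"

definition incomparable :: "('a \<Rightarrow> 'a \<Rightarrow> bool) \<Rightarrow> 'a \<Rightarrow> 'a \<Rightarrow> bool" where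
  "incomparable le x y \<longleftrightarrow> \<not> le x y \<and> \<not> le y x"

definition antichain_seqs :: "'a set \<Rightarrow> ('a \<Rightarrow> 'a \<Rightarrow> bool) \<Rightarrow> 'a list set" where
  "antichain_seqs A le = {xs. xs \<noteq> [] \<and> set xs \<subseteq> A \<and>
     (\<forall>i j. i < j \<and> j < length xs \<longrightarrow> incomparable le (xs ! i) (xs ! j))}"

definition bad_seqs :: "'a set \<Rightarrow> ('a \<Rightarrow> 'a \<Rightarrow> bool) \<Rightarrow> 'a list set" where
  "bad_seqs A le = {xs. xs \<noteq> [] \<and> set xs \<subseteq> A \<and>
     (\<forall>i j. i < j \<and> j < length xs \<longrightarrow> \<not> le (xs ! i) (xs ! j))}"

definition width :: "'a set \<Rightarrow> ('a \<Rightarrow> 'a \<Rightarrow> bool) \<Rightarrow> 'a list set rel" where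
  "width A le = forest_inv (antichain_seqs A le) extends1"

definition mot :: "'a set \<Rightarrow> ('a \<Rightarrow> 'a \<Rightarrow> bool) \<Rightarrow> 'a list set rel" where
  "mot A le = forest_inv (bad_seqs A le) extends1"

definition not_below :: "'a set \<Rightarrow> ('a \<Rightarrow> 'a \<Rightarrow> bool) \<Rightarrow> 'a set \<Rightarrow> 'a set" where
  "not_below A le Y = {y \<in> A. \<forall>x\<in>Y. \<not> le y x}"

definition transferable :: "'a set \<Rightarrow> ('a \<Rightarrow> 'a \<Rightarrow> bool) \<Rightarrow> bool" where
  "transferable A le \<longleftrightarrow>
     (\<forall>Y. finite Y \<and> Y \<subseteq> A \<longrightarrow> (width (not_below A le Y) le, width A le) \<in> ordIso)"

definition prod_le :: "('a \<Rightarrow> 'a \<Rightarrow> bool) \<Rightarrow> ('b \<Rightarrow> 'b \<Rightarrow> bool) \<Rightarrow> 'a \<times> 'b \<Rightarrow> 'a \<times> 'b \<Rightarrow> bool" where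
  "prod_le leA leB p q \<longleftrightarrow> leA (fst p) (fst q) \<and> leB (snd p) (snd q)"

text \<open>Ordinal product r \<cdot> s (s copies of r): order on Field r \<times> Field s comparing
  the s-coordinate first (anti-lexicographic).\<close>

definition ord_mult :: "'x rel \<Rightarrow> 'y rel \<Rightarrow> ('x \<times> 'y) rel" where
  "ord_mult r s = {((a, b), (a', b')). a \<in> Field r \<and> a' \<in> Field r \<and> b \<in> Field s \<and> b' \<in> Field s \<and>
      (((b, b') \<in> s \<and> b \<noteq> b') \<or> (b = b' \<and> (a, a') \<in> r))}"

end

theory Submission
  imports Defs "HOL-Library.Ramsey"
begin

text \<open>Ordinals are handled through ranks of well-founded forests. An element x of a well-order r
  is dominated by a node t if every strict predecessor of x is dominated by a child of t; if every
  element of r is dominated by some node, then r embeds into the invariant of the forest. So it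
  suffices to dominate every pair (C, D) of w(A) \<cdot> o(B) by a node of the forest of antichains
  of A \<times> B. Such an antichain is built column by column along a bad sequence of B ending in b:
  the current column \<sigma> \<times> {b} follows an antichain \<sigma> of A dominating C, and when the
  B-component D decreases the bad sequence is extended by some b' and a new column is opened at b'.
  Its first element a must not lie below any first coordinate used so far, and transferability of A
  provides such an a whose singleton still dominates any prescribed element of w(A).\<close>

section \<open>Ranks in well-founded forests\<close>

lemma rank_le_nodes: "rank_le N ch s t \<Longrightarrow> s \<in> N \<and> t \<in> N"
  by (erule rank_le.cases) auto

lemma rank_le_childD:
  "rank_le N ch s t \<Longrightarrow> s' \<in> N \<Longrightarrow> ch s s' \<Longrightarrow> \<exists>t'. t' \<in> N \<and> ch t t' \<and> rank_le N ch s' t'"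
  by (erule rank_le.cases) auto

lemma not_rank_leE:
  assumes "s \<in> N" "t \<in> N" "\<not> rank_le N ch s t"
  obtains s' where "s' \<in> N" "ch s s'" "\<And>t'. t' \<in> N \<Longrightarrow> ch t t' \<Longrightarrow> \<not> rank_le N ch s' t'"
proof -
  have "\<not> (\<forall>s'. s' \<in> N \<and> ch s s' \<longrightarrow> (\<exists>t'. t' \<in> N \<and> ch t t' \<and> rank_le N ch s' t'))"
    using assms rank_le.intros by metis
  then show thesis using that by blast
qed

lemma rank_le_trans: "rank_le N ch s t \<Longrightarrow> rank_le N ch t u \<Longrightarrow> rank_le N ch s u"
proof (induction arbitrary: u rule: rank_le.induct)
  case (1 s t)
  show ?case
  proof (rule rank_le.intros)
    show "s \<in> N" "u \<in> N" using 1(1) rank_le_nodes[OF 1(4)] by auto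
    show "\<forall>s'. s' \<in> N \<and> ch s s' \<longrightarrow> (\<exists>u'. u' \<in> N \<and> ch u u' \<and> rank_le N ch s' u')"
    proof (intro allI impI)
      fix s' assume "s' \<in> N \<and> ch s s'"
      then obtain t' where "t' \<in> N" "ch t t'" "\<And>u'. rank_le N ch t' u' \<Longrightarrow> rank_le N ch s' u'"
        using 1(3) by blast
      then show "\<exists>u'. u' \<in> N \<and> ch u u' \<and> rank_le N ch s' u'"
        using rank_le_childD[OF 1(4)] by blast
    qed
  qed
qed

definition rank_less :: "'n set \<Rightarrow> ('n \<Rightarrow> 'n \<Rightarrow> bool) \<Rightarrow> 'n rel" where
  "rank_less N ch = {(u, v). rank_le N ch u v \<and> \<not> rank_le N ch v u}"

definition rank_class :: "'n set \<Rightarrow> ('n \<Rightarrow> 'n \<Rightarrow> bool) \<Rightarrow> 'n \<Rightarrow> 'n set" where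
  "rank_class N ch s = {t \<in> N. rank_le N ch s t \<and> rank_le N ch t s}"

lemma rank_classes_eq: "rank_classes N ch = rank_class N ch ` N"
  unfolding rank_classes_def rank_class_def by blast

lemma Field_forest_inv_sub: "Field (forest_inv N ch) \<subseteq> rank_classes N ch"
  unfolding Field_def forest_inv_def by auto

lemma rank_class_of_mem: "t \<in> rank_class N ch s \<Longrightarrow> rank_class N ch t = rank_class N ch s"
  unfolding rank_class_def by (blast intro: rank_le_trans)

locale wf_forest =
  fixes N :: "'n set" and ch :: "'n \<Rightarrow> 'n \<Rightarrow> bool"
  assumes wf_child: "wf {(t, s). s \<in> N \<and> t \<in> N \<and> ch s t}"
begin

lemma forest_induct:
  assumes "\<And>s. (\<And>s'. s \<in> N \<Longrightarrow> s' \<in> N \<Longrightarrow> ch s s' \<Longrightarrow> P s') \<Longrightarrow> P s"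
  shows "P s"
  using wf_child by (induction s rule: wf_induct_rule) (auto intro: assms)

lemma rank_le_refl: "s \<in> N \<Longrightarrow> rank_le N ch s s"
proof (induction s rule: forest_induct)
  case (1 s)
  then show ?case by (intro rank_le.intros) auto
qed

lemma rank_le_child: "s \<in> N \<Longrightarrow> t \<in> N \<Longrightarrow> ch s t \<Longrightarrow> rank_le N ch t s"
proof (induction s arbitrary: t rule: forest_induct)
  case (1 s)
  show ?case
  proof (rule rank_le.intros)
    show "\<forall>s'. s' \<in> N \<and> ch t s' \<longrightarrow> (\<exists>t'. t' \<in> N \<and> ch s t' \<and> rank_le N ch s' t')"
      using 1(1)[of t] "1.prems" by blast
  qed (use "1.prems" in auto)
qed

lemma not_rank_le_child: "s \<in> N \<Longrightarrow> t \<in> N \<Longrightarrow> ch s t \<Longrightarrow> \<not> rank_le N ch s t"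
proof (induction s arbitrary: t rule: forest_induct)
  case (1 s)
  show ?case
  proof
    assume st: "rank_le N ch s t"
    obtain t' where t': "t' \<in> N" "ch t t'" "rank_le N ch t t'"
      using rank_le_childD[OF st "1.prems"(2,3)] by blast
    then show False using 1(1)[OF "1.prems"(1,2,3,2) t'(1,2)] by blast
  qed
qed

lemma not_rank_le_imp_child:
  "s \<in> N \<Longrightarrow> t \<in> N \<Longrightarrow> \<not> rank_le N ch s t \<Longrightarrow> \<exists>s'. s' \<in> N \<and> ch s s' \<and> rank_le N ch t s'"
proof (induction t arbitrary: s rule: forest_induct)
  case (1 t)
  obtain s' where s': "s' \<in> N" "ch s s'" "\<And>t'. t' \<in> N \<Longrightarrow> ch t t' \<Longrightarrow> \<not> rank_le N ch s' t'"
    using not_rank_leE[OF "1.prems"] by blast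
  have "rank_le N ch t s'"
  proof (rule rank_le.intros)
    show "\<forall>t'. t' \<in> N \<and> ch t t' \<longrightarrow> (\<exists>s''. s'' \<in> N \<and> ch s' s'' \<and> rank_le N ch t' s'')"
      using 1(1) s' "1.prems"(2) by blast
  qed (use s' "1.prems" in auto)
  then show ?case using s' by blast
qed

lemma rank_le_total:
  assumes "s \<in> N" "t \<in> N"
  shows "rank_le N ch s t \<or> rank_le N ch t s"
proof (rule disjCI)
  assume "\<not> rank_le N ch t s"
  then obtain t' where t': "t' \<in> N" "ch t t'" "rank_le N ch s t'"
    using not_rank_le_imp_child[OF assms(2,1)] by blast
  show "rank_le N ch s t"
    using rank_le_trans[OF t'(3) rank_le_child[OF assms(2) t'(1,2)]] .
qed

lemma wf_rank_less: "wf (rank_less N ch)"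
proof -
  have "u \<in> Wellfounded.acc (rank_less N ch)" if "rank_le N ch u s" for u s
    using that
  proof (induction s arbitrary: u rule: forest_induct)
    case (1 s)
    show ?case
    proof (rule accI)
      fix v assume "(v, u) \<in> rank_less N ch"
      then have v: "rank_le N ch v u" "\<not> rank_le N ch u v"
        by (simp_all add: rank_less_def)
      then have "\<not> rank_le N ch s v"
        using rank_le_trans[OF "1.prems"] by blast
      then obtain s' where "s' \<in> N" "ch s s'" "rank_le N ch v s'"
        using not_rank_le_imp_child rank_le_nodes[OF "1.prems"] rank_le_nodes[OF v(1)] by blast
      then show "v \<in> Wellfounded.acc (rank_less N ch)"
        using 1(1) rank_le_nodes[OF "1.prems"] by blast
    qed
  qed
  moreover have "u \<in> Wellfounded.acc (rank_less N ch)" if "u \<notin> N" for u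
  proof (rule accI)
    fix v assume "(v, u) \<in> rank_less N ch"
    then have "rank_le N ch v u" by (simp add: rank_less_def)
    then have "u \<in> N" by (simp add: rank_le_nodes)
    with that show "v \<in> Wellfounded.acc (rank_less N ch)" by contradiction
  qed
  ultimately show ?thesis
    unfolding wf_iff_acc using rank_le_refl by blast
qed

lemma mem_rank_class_self: "s \<in> N \<Longrightarrow> s \<in> rank_class N ch s"
  unfolding rank_class_def using rank_le_refl by blast

lemma rank_class_eq_iff:
  "s \<in> N \<Longrightarrow> rank_class N ch s = rank_class N ch t \<longleftrightarrow> t \<in> N \<and> rank_le N ch s t \<and> rank_le N ch t s"
proof
  assume s: "s \<in> N" and eq: "rank_class N ch s = rank_class N ch t"
  have "s \<in> rank_class N ch t" using mem_rank_class_self[OF s] unfolding eq .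
  then show "t \<in> N \<and> rank_le N ch s t \<and> rank_le N ch t s"
    unfolding rank_class_def by (auto dest: rank_le_nodes)
next
  assume "s \<in> N" "t \<in> N \<and> rank_le N ch s t \<and> rank_le N ch t s"
  then have "t \<in> rank_class N ch s" unfolding rank_class_def by blast
  then show "rank_class N ch s = rank_class N ch t" by (simp add: rank_class_of_mem)
qed

lemma Field_forest_inv: "Field (forest_inv N ch) = rank_class N ch ` N"
proof
  show "Field (forest_inv N ch) \<subseteq> rank_class N ch ` N"
    unfolding Field_def forest_inv_def rank_classes_eq by auto
  have "(rank_class N ch s, rank_class N ch s) \<in> forest_inv N ch" if "s \<in> N" for s
    unfolding forest_inv_def rank_classes_eq
    using that mem_rank_class_self[OF that] rank_le_refl[OF that] by blast
  then show "rank_class N ch ` N \<subseteq> Field (forest_inv N ch)"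
    by (auto intro: FieldI1)
qed

lemma forest_inv_iff:
  assumes "C \<in> Field (forest_inv N ch)" "D \<in> Field (forest_inv N ch)" "s \<in> C" "t \<in> D"
  shows "(C, D) \<in> forest_inv N ch \<longleftrightarrow> rank_le N ch s t"
proof -
  obtain c d where "C = rank_class N ch c" "D = rank_class N ch d"
    using assms(1,2) unfolding Field_forest_inv by blast
  then have C: "C = rank_class N ch s" and D: "D = rank_class N ch t"
    using rank_class_of_mem assms(3,4) by metis+
  show ?thesis
  proof
    assume "(C, D) \<in> forest_inv N ch"
    then obtain s' t' where "s' \<in> C" "t' \<in> D" "rank_le N ch s' t'"
      unfolding forest_inv_def by blast
    then have "rank_le N ch s s'" "rank_le N ch s' t'" "rank_le N ch t' t"
      unfolding C D rank_class_def by auto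
    then show "rank_le N ch s t" by (blast intro: rank_le_trans)
  next
    assume "rank_le N ch s t"
    then show "(C, D) \<in> forest_inv N ch"
      using assms Field_forest_inv_sub unfolding forest_inv_def by blast
  qed
qed

lemma rank_class_le_iff:
  "s \<in> N \<Longrightarrow> t \<in> N \<Longrightarrow> (rank_class N ch s, rank_class N ch t) \<in> forest_inv N ch \<longleftrightarrow> rank_le N ch s t"
  using forest_inv_iff mem_rank_class_self unfolding Field_forest_inv by blast

lemma Well_order_forest_inv: "Well_order (forest_inv N ch)"
proof -
  let ?F = "forest_inv N ch"
  define rep where "rep C = (SOME s. s \<in> C)" for C :: "'n set"
  have rep: "rep C \<in> N" "C = rank_class N ch (rep C)" if C: "C \<in> Field ?F" for C
  proof -
    obtain s where "s \<in> N" "C = rank_class N ch s"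
      using C unfolding Field_forest_inv by blast
    then have "rep C \<in> C" unfolding rep_def using mem_rank_class_self by (metis someI)
    then show "rep C \<in> N" "C = rank_class N ch (rep C)"
      using rank_class_of_mem[of "rep C" N ch s] \<open>C = rank_class N ch s\<close>
      unfolding rank_class_def by auto
  qed
  have le: "(C, D) \<in> ?F \<longleftrightarrow> rank_le N ch (rep C) (rep D)"
    if "C \<in> Field ?F" "D \<in> Field ?F" for C D
    using forest_inv_iff[OF that] rep that mem_rank_class_self by metis
  have eq: "C = D \<longleftrightarrow> rank_le N ch (rep C) (rep D) \<and> rank_le N ch (rep D) (rep C)"
    if "C \<in> Field ?F" "D \<in> Field ?F" for C D
    using rank_class_eq_iff rep that by metis
  have "?F \<subseteq> Field ?F \<times> Field ?F"
    by (auto intro: FieldI1 FieldI2)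
  moreover have "refl_on (Field ?F) ?F"
    unfolding refl_on_def using le rep rank_le_refl by metis
  moreover have "trans ?F"
    unfolding trans_def using le rank_le_trans by (metis FieldI1 FieldI2)
  moreover have "antisym ?F"
    unfolding antisym_def using le eq by (metis FieldI1 FieldI2)
  moreover have "total_on (Field ?F) ?F"
    unfolding total_on_def using le rep rank_le_total by metis
  moreover have "wf (?F - Id)"
  proof (rule wf_subset)
    show "wf (inv_image (rank_less N ch) rep)" using wf_rank_less by simp
    show "?F - Id \<subseteq> inv_image (rank_less N ch) rep"
    proof
      fix p assume "p \<in> ?F - Id"
      then obtain C D where p: "p = (C, D)" "(C, D) \<in> ?F" "C \<noteq> D" by (cases p) auto
      then have "C \<in> Field ?F" "D \<in> Field ?F" by (auto intro: FieldI1 FieldI2)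
      then show "p \<in> inv_image (rank_less N ch) rep"
        using p le eq unfolding rank_less_def by auto
    qed
  qed
  ultimately show ?thesis
    unfolding well_order_on_def linear_order_on_def partial_order_on_def preorder_on_def by blast
qed

lemma rank_le_descendant:
  "(\<lambda>s t. s \<in> N \<and> t \<in> N \<and> ch s t)\<^sup>*\<^sup>* s t \<Longrightarrow> s \<in> N \<Longrightarrow> rank_le N ch t s"
proof (induction rule: rtranclp_induct)
  case base
  then show ?case by (rule rank_le_refl)
next
  case (step u v)
  then show ?case using rank_le_trans[OF rank_le_child step.IH] by blast
qed

end

section \<open>Bounding well-orders by ranks\<close>

text \<open>wo_rank_le r N ch x t: the order type of the strict r-predecessors of x is at most the
  rank of the node t.\<close>

inductive wo_rank_le :: "'x rel \<Rightarrow> 'n set \<Rightarrow> ('n \<Rightarrow> 'n \<Rightarrow> bool) \<Rightarrow> 'x \<Rightarrow> 'n \<Rightarrow> bool"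
  for r N ch where
  "t \<in> N \<Longrightarrow> (\<forall>y. (y, x) \<in> r \<and> y \<noteq> x \<longrightarrow> (\<exists>t'. t' \<in> N \<and> ch t t' \<and> wo_rank_le r N ch y t'))
   \<Longrightarrow> wo_rank_le r N ch x t"

lemma wo_rank_le_node: "wo_rank_le r N ch x t \<Longrightarrow> t \<in> N"
  by (erule wo_rank_le.cases) auto

lemma wo_rank_leD:
  "wo_rank_le r N ch x t \<Longrightarrow> (y, x) \<in> r \<Longrightarrow> y \<noteq> x \<Longrightarrow> \<exists>t'. t' \<in> N \<and> ch t t' \<and> wo_rank_le r N ch y t'"
  by (erule wo_rank_le.cases) auto

definition strict_hom :: "'x rel \<Rightarrow> 'y rel \<Rightarrow> ('x \<Rightarrow> 'y) \<Rightarrow> bool" where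
  "strict_hom r r' f \<longleftrightarrow> (\<forall>x y. (x, y) \<in> r \<and> x \<noteq> y \<longrightarrow> (f x, f y) \<in> r' \<and> f x \<noteq> f y)"

lemma embed_strict_hom: "Well_order r \<Longrightarrow> embed r r' f \<Longrightarrow> strict_hom r r' f"
  unfolding strict_hom_def using embed_compat embed_inj_on
  by (metis FieldI1 FieldI2 compat_def inj_on_def)

lemma wo_rank_le_strict_hom:
  assumes "strict_hom r r' f"
  shows "wo_rank_le r' N ch (f x) t \<Longrightarrow> wo_rank_le r N ch x t"
proof (induction "f x" t arbitrary: x rule: wo_rank_le.induct)
  case (1 t)
  show ?case
  proof (rule wo_rank_le.intros)
    show "\<forall>y. (y, x) \<in> r \<and> y \<noteq> x \<longrightarrow> (\<exists>t'. t' \<in> N \<and> ch t t' \<and> wo_rank_le r N ch y t')"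
      using 1(2) assms unfolding strict_hom_def by blast
  qed fact
qed

context wf_forest
begin

lemma wo_rank_le_rank_class_iff:
  assumes "s \<in> N"
  shows "wo_rank_le (forest_inv N ch) N ch (rank_class N ch s) t \<longleftrightarrow> rank_le N ch s t"
proof
  show "wo_rank_le (forest_inv N ch) N ch (rank_class N ch s) t \<Longrightarrow> rank_le N ch s t"
    using assms
  proof (induction s arbitrary: t rule: forest_induct)
    case (1 s)
    show ?case
    proof (rule rank_le.intros)
      show "\<forall>s'. s' \<in> N \<and> ch s s' \<longrightarrow> (\<exists>t'. t' \<in> N \<and> ch t t' \<and> rank_le N ch s' t')"
      proof (intro allI impI)
        fix s' assume s': "s' \<in> N \<and> ch s s'"
        have "(rank_class N ch s', rank_class N ch s) \<in> forest_inv N ch"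
          "rank_class N ch s' \<noteq> rank_class N ch s"
          using rank_class_le_iff rank_class_eq_iff rank_le_child not_rank_le_child
            s' "1.prems"(2) by auto
        then obtain t' where "t' \<in> N" "ch t t'" "wo_rank_le (forest_inv N ch) N ch (rank_class N ch s') t'"
          using wo_rank_leD[OF "1.prems"(1)] by blast
        then show "\<exists>t'. t' \<in> N \<and> ch t t' \<and> rank_le N ch s' t'"
          using 1(1) s' "1.prems"(2) by blast
      qed
    qed (use "1.prems" wo_rank_le_node in auto)
  qed
next
  show "rank_le N ch s t \<Longrightarrow> wo_rank_le (forest_inv N ch) N ch (rank_class N ch s) t"
  proof (induction t arbitrary: s rule: forest_induct)
    case (1 t)
    show ?case
    proof (rule wo_rank_le.intros)
      show "\<forall>Y. (Y, rank_class N ch s) \<in> forest_inv N ch \<and> Y \<noteq> rank_class N ch s \<longrightarrow>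
          (\<exists>t'. t' \<in> N \<and> ch t t' \<and> wo_rank_le (forest_inv N ch) N ch Y t')"
      proof (intro allI impI)
        fix Y assume Y: "(Y, rank_class N ch s) \<in> forest_inv N ch \<and> Y \<noteq> rank_class N ch s"
        then have "Y \<in> Field (forest_inv N ch)" by (blast intro: FieldI1)
        then obtain u where u: "u \<in> N" "Y = rank_class N ch u"
          unfolding Field_forest_inv by blast
        have "rank_le N ch u s" "\<not> rank_le N ch s u"
          using rank_class_le_iff rank_class_eq_iff Y u rank_le_nodes[OF "1.prems"] by auto
        then have "\<not> rank_le N ch t u"
          using rank_le_trans[OF "1.prems"] by blast
        then obtain t' where "t' \<in> N" "ch t t'" "rank_le N ch u t'"
          using not_rank_le_imp_child u(1) rank_le_nodes[OF "1.prems"] by blast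
        then show "\<exists>t'. t' \<in> N \<and> ch t t' \<and> wo_rank_le (forest_inv N ch) N ch Y t'"
          using 1(1) u(2) rank_le_nodes[OF "1.prems"] by blast
      qed
    qed (use rank_le_nodes[OF "1.prems"] in auto)
  qed
qed

lemma ordLeq_forest_inv:
  assumes WO: "Well_order r" and bounded: "\<And>x. x \<in> Field r \<Longrightarrow> \<exists>t. wo_rank_le r N ch x t"
  shows "(r, forest_inv N ch) \<in> ordLeq"
proof (rule ccontr)
  let ?F = "forest_inv N ch"
  assume "(r, ?F) \<notin> ordLeq"
  then have "(?F, r) \<in> ordLess" using not_ordLeq_iff_ordLess[OF Well_order_forest_inv WO] by blast
  then obtain h where h: "embed ?F r h" and "h ` Field ?F \<noteq> Field r"
    unfolding ordLess_def embedS_def bij_betw_def using embed_inj_on by blast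
  moreover have "wo_rel.ofilter r (h ` Field ?F)"
    using embed_Field_ofilter[OF Well_order_forest_inv WO h] .
  ultimately obtain a where a: "a \<in> Field r" "h ` Field ?F = underS r a"
    using WO by (auto simp: wo_rel.ofilter_underS_Field wo_rel_def)
  obtain s where s: "wo_rank_le r N ch a s" using bounded a(1) by blast
  then have "s \<in> N" by (rule wo_rank_le_node)
  then have "h (rank_class N ch s) \<in> underS r a"
    unfolding a(2)[symmetric] Field_forest_inv by blast
  then obtain t where t: "t \<in> N" "ch s t" "wo_rank_le r N ch (h (rank_class N ch s)) t"
    using wo_rank_leD[OF s] unfolding underS_def by blast
  have "wo_rank_le ?F N ch (rank_class N ch s) t"
    using wo_rank_le_strict_hom[OF embed_strict_hom[OF Well_order_forest_inv h] t(3)] .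
  then show False
    using wo_rank_le_rank_class_iff \<open>s \<in> N\<close> not_rank_le_child t(1,2) by blast
qed

lemma wo_rank_le_node_exists:
  assumes "C \<in> Field (forest_inv N ch)"
  obtains s where "s \<in> N" "wo_rank_le (forest_inv N ch) N ch C s"
proof -
  obtain s where "s \<in> N" "C = rank_class N ch s"
    using assms unfolding Field_forest_inv by blast
  then show thesis
    using that wo_rank_le_rank_class_iff rank_le_refl by blast
qed

end

lemma Field_ord_mult_subset: "Field (ord_mult r s) \<subseteq> Field r \<times> Field s"
  unfolding ord_mult_def Field_def by auto

lemma Well_order_ord_mult:
  assumes r: "Well_order r" and s: "Well_order s"
  shows "Well_order (ord_mult r s)"
proof -
  let ?M = "ord_mult r s"
  have r_refl: "\<And>a. a \<in> Field r \<Longrightarrow> (a, a) \<in> r" and r_trans: "trans r"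
    and r_anti: "antisym r" and r_total: "total_on (Field r) r"
    using r unfolding well_order_on_def linear_order_on_def partial_order_on_def
      preorder_on_def refl_on_def by blast+
  have s_trans: "trans s" and s_anti: "antisym s" and s_total: "total_on (Field s) s"
    and s_wf: "wf (s - Id)" and r_wf: "wf (r - Id)"
    using r s unfolding well_order_on_def linear_order_on_def partial_order_on_def
      preorder_on_def by blast+
  have diag: "((a, b), (a, b)) \<in> ?M" if "a \<in> Field r" "b \<in> Field s" for a b
    using that r_refl unfolding ord_mult_def by simp
  have Field_M: "Field ?M = Field r \<times> Field s"
  proof
    show "Field ?M \<subseteq> Field r \<times> Field s"
      by (rule Field_ord_mult_subset)
    show "Field r \<times> Field s \<subseteq> Field ?M"
      using diag by (auto intro: FieldI1)
  qed
  have "?M \<subseteq> Field ?M \<times> Field ?M"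
    by (auto intro: FieldI1 FieldI2)
  moreover have "refl_on (Field ?M) ?M"
    unfolding refl_on_def Field_M using diag by auto
  moreover have "trans ?M"
    using r_trans s_trans s_anti unfolding trans_def antisym_def ord_mult_def by blast
  moreover have "antisym ?M"
    using r_anti s_anti unfolding antisym_def ord_mult_def by blast
  moreover have "total_on (Field ?M) ?M"
    unfolding total_on_def Field_M
  proof (intro ballI impI)
    fix p q assume "p \<in> Field r \<times> Field s" "q \<in> Field r \<times> Field s" "p \<noteq> q"
    then show "(p, q) \<in> ?M \<or> (q, p) \<in> ?M"
      using r_total s_total unfolding total_on_def ord_mult_def by (cases p, cases q) auto
  qed
  moreover have "wf (?M - Id)"
  proof (rule wf_subset)
    show "wf (inv_image ((s - Id) <*lex*> (r - Id)) (\<lambda>(a, b). (b, a)))"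
      using wf_lex_prod[OF s_wf r_wf] by (rule wf_inv_image)
    show "?M - Id \<subseteq> inv_image ((s - Id) <*lex*> (r - Id)) (\<lambda>(a, b). (b, a))"
      unfolding ord_mult_def by auto
  qed
  ultimately show ?thesis
    unfolding well_order_on_def linear_order_on_def partial_order_on_def preorder_on_def by blast
qed

section \<open>Well-quasi-orders and their forests of sequences\<close>

lemma wqo_on_subset: "wqo_on A le \<Longrightarrow> B \<subseteq> A \<Longrightarrow> wqo_on B le"
  unfolding wqo_on_def qo_on_def by blast

lemma wqo_on_refl: "wqo_on A le \<Longrightarrow> x \<in> A \<Longrightarrow> le x x"
  unfolding wqo_on_def qo_on_def by blast

lemma wqo_on_good:
  fixes f :: "nat \<Rightarrow> 'a"
  assumes "wqo_on A le" "\<And>i. f i \<in> A"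
  shows "\<exists>i j. i < j \<and> le (f i) (f j)"
  using assms unfolding wqo_on_def by blast

lemma wqo_on_increasing_subseq:
  fixes g :: "nat \<Rightarrow> 'a"
  assumes wqo: "wqo_on A le" and Z: "infinite Z" and gZ: "g ` Z \<subseteq> A"
  obtains Y where "Y \<subseteq> Z" "infinite Y" "\<And>i j. i \<in> Y \<Longrightarrow> j \<in> Y \<Longrightarrow> i < j \<Longrightarrow> le (g i) (g j)"
proof -
  define c where "c X = (if le (g (Min X)) (g (Max X)) then 1 else 0 :: nat)" for X
  have c: "c {i, j} = (if le (g i) (g j) then 1 else 0)" if "i < j" for i j
    using that unfolding c_def by (simp add: min_def max_def)
  have two_colours: "\<forall>x\<in>Z. \<forall>y\<in>Z. x \<noteq> y \<longrightarrow> c {x, y} < 2" unfolding c_def by simp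
  obtain Y t where Y: "Y \<subseteq> Z" "infinite Y" "t < 2" "\<forall>i\<in>Y. \<forall>j\<in>Y. i \<noteq> j \<longrightarrow> c {i, j} = t"
    using Ramsey2[OF Z two_colours] by blast
  have "t \<noteq> 0"
  proof
    assume "t = 0"
    have "g (enumerate Y k) \<in> A" for k
      using gZ Y(1) enumerate_in_set[OF Y(2)] by (auto simp: image_subset_iff)
    then obtain i j where ij: "i < j" "le (g (enumerate Y i)) (g (enumerate Y j))"
      using wqo_on_good[OF wqo, of "\<lambda>k. g (enumerate Y k)"] by blast
    then have "c {enumerate Y i, enumerate Y j} = 1"
      using c[OF enumerate_mono[OF ij(1) Y(2)]] by simp
    moreover have "c {enumerate Y i, enumerate Y j} = t"
      using Y(4) enumerate_in_set[OF Y(2)] enumerate_mono[OF ij(1) Y(2)] by auto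
    ultimately show False using \<open>t = 0\<close> by simp
  qed
  then have "t = 1" using Y(3) by simp
  have "le (g i) (g j)" if "i \<in> Y" "j \<in> Y" "i < j" for i j
  proof -
    have "c {i, j} = 1"
      using Y(4)[rule_format, OF that(1,2)] that(3) \<open>t = 1\<close> by simp
    then show ?thesis using c[OF that(3)] by (cases "le (g i) (g j)") auto
  qed
  with Y(1,2) show thesis by (rule that)
qed

lemma qo_on_refl: "qo_on A le \<Longrightarrow> x \<in> A \<Longrightarrow> le x x"
  unfolding qo_on_def by blast

lemma qo_on_trans: "qo_on A le \<Longrightarrow> x \<in> A \<Longrightarrow> y \<in> A \<Longrightarrow> z \<in> A \<Longrightarrow> le x y \<Longrightarrow> le y z \<Longrightarrow> le x z"
  unfolding qo_on_def by blast

lemma qo_on_prod: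
  assumes A: "qo_on A leA" and B: "qo_on B leB"
  shows "qo_on (A \<times> B) (prod_le leA leB)"
proof (unfold qo_on_def, intro conjI ballI impI)
  fix p assume "p \<in> A \<times> B"
  then show "prod_le leA leB p p"
    unfolding prod_le_def using qo_on_refl[OF A] qo_on_refl[OF B] by (simp add: mem_Times_iff)
next
  fix p q r assume "p \<in> A \<times> B" "q \<in> A \<times> B" "r \<in> A \<times> B"
    and "prod_le leA leB p q" "prod_le leA leB q r"
  then show "prod_le leA leB p r"
    unfolding prod_le_def mem_Times_iff using qo_on_trans[OF A] qo_on_trans[OF B] by metis
qed

lemma wqo_on_prod:
  assumes A: "wqo_on A leA" and B: "wqo_on B leB"
  shows "wqo_on (A \<times> B) (prod_le leA leB)"
  unfolding wqo_on_def
proof (intro conjI allI impI)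
  show "qo_on (A \<times> B) (prod_le leA leB)"
    using A B qo_on_prod unfolding wqo_on_def by blast
  fix e :: "nat \<Rightarrow> 'a \<times> 'b" assume e: "\<forall>i. e i \<in> A \<times> B"
  obtain Y1 where Y1: "infinite Y1" "\<And>i j. i \<in> Y1 \<Longrightarrow> j \<in> Y1 \<Longrightarrow> i < j \<Longrightarrow> leA (fst (e i)) (fst (e j))"
    using wqo_on_increasing_subseq[OF A infinite_UNIV_nat, of "fst \<circ> e"] e by (auto simp: mem_Times_iff)
  obtain Y2 where Y2: "Y2 \<subseteq> Y1" "infinite Y2" "\<And>i j. i \<in> Y2 \<Longrightarrow> j \<in> Y2 \<Longrightarrow> i < j \<Longrightarrow> leB (snd (e i)) (snd (e j))"
    using wqo_on_increasing_subseq[OF B Y1(1), of "snd \<circ> e"] e by (auto simp: mem_Times_iff)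
  have "enumerate Y2 0 < enumerate Y2 1" "enumerate Y2 0 \<in> Y2" "enumerate Y2 1 \<in> Y2"
    using enumerate_mono[OF _ Y2(2)] enumerate_in_set[OF Y2(2)] by auto
  then show "\<exists>i j. i < j \<and> prod_le leA leB (e i) (e j)"
    using Y1(2) Y2 unfolding prod_le_def by blast
qed

lemma antichain_seqs_iff:
  "xs \<in> antichain_seqs A le \<longleftrightarrow> xs \<noteq> [] \<and> set xs \<subseteq> A \<and> sorted_wrt (incomparable le) xs"
  unfolding antichain_seqs_def sorted_wrt_iff_nth_less by blast

lemma bad_seqs_iff:
  "xs \<in> bad_seqs A le \<longleftrightarrow> xs \<noteq> [] \<and> set xs \<subseteq> A \<and> sorted_wrt (\<lambda>x y. \<not> le x y) xs"
  unfolding bad_seqs_def sorted_wrt_iff_nth_less by blast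

lemma antichain_seqs_subset_bad_seqs: "antichain_seqs A le \<subseteq> bad_seqs A le"
  unfolding antichain_seqs_def bad_seqs_def incomparable_def by blast

lemma extends1_chainE:
  assumes "\<And>i. extends1 (f i) (f (Suc i))"
  obtains x where "\<And>n. f n = f 0 @ map x [0..<n]"
proof -
  obtain x where x: "\<And>i. f (Suc i) = f i @ [x i]"
    using assms unfolding extends1_def by metis
  have "f n = f 0 @ map x [0..<n]" for n
    by (induction n) (simp_all add: x)
  then show thesis by (rule that)
qed

lemma wf_forest_subset: "wf_forest N ch \<Longrightarrow> N' \<subseteq> N \<Longrightarrow> wf_forest N' ch"
  unfolding wf_forest_def by (erule wf_subset) auto

lemma wf_forest_bad_seqs:
  assumes wqo: "wqo_on A le"
  shows "wf_forest (bad_seqs A le) extends1"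
  unfolding wf_forest_def wf_iff_no_infinite_down_chain
proof (rule notI, elim exE)
  fix f assume "\<forall>i. (f (Suc i), f i) \<in> {(t, s). s \<in> bad_seqs A le \<and> t \<in> bad_seqs A le \<and> extends1 s t}"
  then have f: "\<forall>i. f i \<in> bad_seqs A le \<and> extends1 (f i) (f (Suc i))" by simp
  then obtain x where x: "\<And>n. f n = f 0 @ map x [0..<n]"
    using extends1_chainE by blast
  have bad: "sorted_wrt (\<lambda>a b. \<not> le a b) (map x [0..<n]) \<and> set (map x [0..<n]) \<subseteq> A" for n
  proof -
    have "f n \<in> bad_seqs A le" using f by blast
    then show ?thesis unfolding bad_seqs_iff x[of n] sorted_wrt_append by simp
  qed
  then have "x i \<in> A" for i
    using bad[of "Suc i"] by auto
  then obtain i j where ij: "i < j" "le (x i) (x j)"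
    using wqo_on_good[OF wqo, of x] by blast
  have "\<not> le (x i) (x j)"
    using sorted_wrt_nth_less[OF conjunct1[OF bad[of "Suc j"]], of i j] ij(1)
    by (simp add: nth_append del: upt_Suc)
  then show False using ij(2) by simp
qed

lemma wf_forest_antichain_seqs: "wqo_on A le \<Longrightarrow> wf_forest (antichain_seqs A le) extends1"
  using wf_forest_bad_seqs wf_forest_subset antichain_seqs_subset_bad_seqs by blast

lemma Well_order_width: "wqo_on A le \<Longrightarrow> Well_order (width A le)"
  unfolding width_def by (rule wf_forest.Well_order_forest_inv[OF wf_forest_antichain_seqs])

lemma Well_order_mot: "wqo_on A le \<Longrightarrow> Well_order (mot A le)"
  unfolding mot_def by (rule wf_forest.Well_order_forest_inv[OF wf_forest_bad_seqs])

lemma antichain_seqs_snoc: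
  "xs @ [x] \<in> antichain_seqs A le \<longleftrightarrow>
     set xs \<subseteq> A \<and> sorted_wrt (incomparable le) xs \<and> x \<in> A \<and> (\<forall>y\<in>set xs. incomparable le y x)"
  unfolding antichain_seqs_iff sorted_wrt_append by auto

lemma antichain_seqs_snocI:
  "xs \<in> antichain_seqs A le \<Longrightarrow> x \<in> A \<Longrightarrow> (\<And>y. y \<in> set xs \<Longrightarrow> incomparable le y x) \<Longrightarrow>
    xs @ [x] \<in> antichain_seqs A le"
  by (simp add: antichain_seqs_iff sorted_wrt_append)

lemma bad_seqs_snoc:
  "xs @ [x] \<in> bad_seqs A le \<longleftrightarrow>
     set xs \<subseteq> A \<and> sorted_wrt (\<lambda>x y. \<not> le x y) xs \<and> x \<in> A \<and> (\<forall>y\<in>set xs. \<not> le y x)"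
  unfolding bad_seqs_iff sorted_wrt_append by auto

lemma antichain_seqs_descends_from_hd:
  assumes "xs \<in> antichain_seqs A le"
  shows "(\<lambda>s t. s \<in> antichain_seqs A le \<and> t \<in> antichain_seqs A le \<and> extends1 s t)\<^sup>*\<^sup>* [hd xs] xs"
  using assms
proof (induction xs rule: rev_induct)
  case Nil
  then show ?case by (simp add: antichain_seqs_def)
next
  case (snoc x xs)
  show ?case
  proof (cases "xs = []")
    case False
    then have "xs \<in> antichain_seqs A le"
      using snoc.prems by (simp add: antichain_seqs_iff sorted_wrt_append)
    then show ?thesis
      using snoc False by (auto simp: extends1_def intro: rtranclp.rtrancl_into_rtrancl)
  qed simp
qed

lemma not_below_subset: "not_below A le Y \<subseteq> A"
  unfolding not_below_def by blast

lemma transferable_wo_rank_le_singleton: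
  assumes wqo: "wqo_on A le" and transferable: "transferable A le"
    and Y: "finite Y" "Y \<subseteq> A" and C: "C \<in> Field (width A le)"
  obtains a where "a \<in> not_below A le Y"
    "wo_rank_le (width A le) (antichain_seqs (not_below A le Y) le) extends1 C [a]"
proof -
  let ?A' = "not_below A le Y"
  let ?N' = "antichain_seqs ?A' le"
  interpret A': wf_forest ?N' extends1
    using wf_forest_antichain_seqs wqo_on_subset[OF wqo not_below_subset] by blast
  have "(width A le, width ?A' le) \<in> ordIso"
    using transferable Y unfolding transferable_def by (blast intro: ordIso_symmetric)
  then obtain g where "Well_order (width A le)" and iso: "iso (width A le) (width ?A' le) g"
    unfolding ordIso_def by blast
  then have hom: "strict_hom (width A le) (width ?A' le) g"
    using embed_strict_hom unfolding iso_def by blast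
  have "g C \<in> Field (width ?A' le)"
    using iso C unfolding iso_def bij_betw_def by blast
  then obtain s where s: "s \<in> ?N'" "g C = rank_class ?N' extends1 s"
    unfolding width_def A'.Field_forest_inv by blast
  have hd: "hd s \<in> ?A'" "[hd s] \<in> ?N'"
    using s(1) by (cases s; simp add: antichain_seqs_def)+
  have "rank_le ?N' extends1 s [hd s]"
    using A'.rank_le_descendant[OF antichain_seqs_descends_from_hd[OF s(1)] hd(2)] .
  then have "wo_rank_le (width ?A' le) ?N' extends1 (g C) [hd s]"
    unfolding width_def s(2) using A'.wo_rank_le_rank_class_iff[OF s(1)] by blast
  then show thesis
    by (rule that[OF hd(1) wo_rank_le_strict_hom[OF hom]])
qed

section \<open>Layered antichains of the product\<close>

text \<open>layered A leA B leB \<pi> \<sigma> \<beta> b: the antichain \<pi> @ \<sigma> \<times> {b} of A \<times> B is built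
  along the bad sequence \<beta> @ [b]. Its finished columns \<pi> take second coordinates in \<beta>, so
  nothing in them lies below a point of the current column \<sigma> \<times> {b}; and \<sigma> avoids everything
  below a first coordinate of \<pi>, so nothing in the current column lies below a point of \<pi>.\<close>

definition layered ::
  "'a set \<Rightarrow> ('a \<Rightarrow> 'a \<Rightarrow> bool) \<Rightarrow> 'b set \<Rightarrow> ('b \<Rightarrow> 'b \<Rightarrow> bool) \<Rightarrow>
   ('a \<times> 'b) list \<Rightarrow> 'a list \<Rightarrow> 'b list \<Rightarrow> 'b \<Rightarrow> bool" where
  "layered A leA B leB \<pi> \<sigma> \<beta> b \<longleftrightarrow>
     \<beta> @ [b] \<in> bad_seqs B leB \<and> snd ` set \<pi> \<subseteq> set \<beta> \<and>
     \<sigma> \<in> antichain_seqs (not_below A leA (fst ` set \<pi>)) leA \<and>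
     \<pi> @ map (\<lambda>a. (a, b)) \<sigma> \<in> antichain_seqs (A \<times> B) (prod_le leA leB)"

lemma layered_init:
  assumes "\<sigma> \<in> antichain_seqs A leA" "\<beta> @ [b] \<in> bad_seqs B leB" "leB b b"
  shows "layered A leA B leB [] \<sigma> \<beta> b"
proof -
  have "not_below A leA {} = A" unfolding not_below_def by blast
  moreover have "b \<in> B" using assms(2) unfolding bad_seqs_def by auto
  ultimately show ?thesis
    using assms unfolding layered_def antichain_seqs_def incomparable_def prod_le_def by auto
qed

lemma layered_snoc_current:
  assumes lay: "layered A leA B leB \<pi> \<sigma> \<beta> b"
    and \<sigma>a: "\<sigma> @ [a] \<in> antichain_seqs (not_below A leA (fst ` set \<pi>)) leA"
  shows "layered A leA B leB \<pi> (\<sigma> @ [a]) \<beta> b"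
proof -
  let ?A' = "not_below A leA (fst ` set \<pi>)"
  have a: "a \<in> ?A'" "\<forall>x\<in>set \<sigma>. incomparable leA x a"
    using \<sigma>a unfolding antichain_seqs_snoc by auto
  have b: "b \<in> B" "\<forall>y\<in>set \<beta>. \<not> leB y b"
    using lay unfolding layered_def bad_seqs_snoc by auto
  have incomparable: "incomparable (prod_le leA leB) z (a, b)"
    if "z \<in> set (\<pi> @ map (\<lambda>a. (a, b)) \<sigma>)" for z
  proof (cases "z \<in> set \<pi>")
    case True
    then have "\<not> leB (snd z) b" "\<not> leA a (fst z)"
      using lay a(1) b(2) unfolding layered_def not_below_def by auto
    then show ?thesis unfolding incomparable_def prod_le_def by simp
  next
    case False
    then show ?thesis
      using that a(2) unfolding incomparable_def prod_le_def by auto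
  qed
  have "(a, b) \<in> A \<times> B" using a(1) b(1) not_below_subset[of A leA] by blast
  then have "(\<pi> @ map (\<lambda>a. (a, b)) \<sigma>) @ [(a, b)] \<in> antichain_seqs (A \<times> B) (prod_le leA leB)"
    using lay incomparable unfolding layered_def by (blast intro: antichain_seqs_snocI)
  then show ?thesis
    using lay \<sigma>a unfolding layered_def by simp
qed

lemma layered_open_column:
  assumes lay: "layered A leA B leB \<pi> \<sigma> \<beta> b"
    and b': "\<beta> @ [b, b'] \<in> bad_seqs B leB"
    and a: "a \<in> not_below A leA (fst ` set (\<pi> @ map (\<lambda>a. (a, b)) \<sigma>))"
  shows "layered A leA B leB (\<pi> @ map (\<lambda>a. (a, b)) \<sigma>) [a] (\<beta> @ [b]) b'"
proof -
  let ?\<pi> = "\<pi> @ map (\<lambda>a. (a, b)) \<sigma>"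
  have b'B: "b' \<in> B" "\<forall>y\<in>set (\<beta> @ [b]). \<not> leB y b'"
    using b' bad_seqs_snoc[of "\<beta> @ [b]" b' B leB] by auto
  have snd: "snd ` set ?\<pi> \<subseteq> set (\<beta> @ [b])"
    using lay unfolding layered_def by auto
  have incomparable: "incomparable (prod_le leA leB) z (a, b')" if "z \<in> set ?\<pi>" for z
  proof -
    have "\<not> leB (snd z) b'" "\<not> leA a (fst z)"
      using that snd b'B(2) a unfolding not_below_def by auto
    then show ?thesis unfolding incomparable_def prod_le_def by simp
  qed
  have "(a, b') \<in> A \<times> B" using a b'B(1) not_below_subset[of A leA] by blast
  then have "?\<pi> @ [(a, b')] \<in> antichain_seqs (A \<times> B) (prod_le leA leB)"
    using lay incomparable unfolding layered_def by (blast intro: antichain_seqs_snocI)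
  moreover have "[a] \<in> antichain_seqs (not_below A leA (fst ` set ?\<pi>)) leA"
    using a unfolding antichain_seqs_def by simp
  ultimately show ?thesis
    using b' snd unfolding layered_def by simp
qed

lemma layered_extend_column:
  assumes lay: "layered A leA B leB \<pi> \<sigma> \<beta> b"
    and C: "wo_rank_le (width A leA) (antichain_seqs (not_below A leA (fst ` set \<pi>)) leA) extends1 C \<sigma>"
    and C': "(C', C) \<in> width A leA" "C' \<noteq> C"
  obtains a where "layered A leA B leB \<pi> (\<sigma> @ [a]) \<beta> b"
    "wo_rank_le (width A leA) (antichain_seqs (not_below A leA (fst ` set \<pi>)) leA) extends1 C' (\<sigma> @ [a])"
proof -
  obtain \<sigma>' where \<sigma>': "\<sigma>' \<in> antichain_seqs (not_below A leA (fst ` set \<pi>)) leA" "extends1 \<sigma> \<sigma>'"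
    "wo_rank_le (width A leA) (antichain_seqs (not_below A leA (fst ` set \<pi>)) leA) extends1 C' \<sigma>'"
    using wo_rank_leD[OF C C'] by blast
  then obtain a where "\<sigma>' = \<sigma> @ [a]" unfolding extends1_def by blast
  then show thesis
    using that layered_snoc_current[OF lay] \<sigma>'(1,3) by blast
qed

lemma layered_new_column:
  assumes wqo: "wqo_on A leA" and transferable: "transferable A leA"
    and lay: "layered A leA B leB \<pi> \<sigma> \<beta> b"
    and D: "wo_rank_le (mot B leB) (bad_seqs B leB) extends1 D (\<beta> @ [b])"
    and D': "(D', D) \<in> mot B leB" "D' \<noteq> D" and C': "C' \<in> Field (width A leA)"
  obtains a b' where "layered A leA B leB (\<pi> @ map (\<lambda>a. (a, b)) \<sigma>) [a] (\<beta> @ [b]) b'"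
    "wo_rank_le (width A leA) (antichain_seqs (not_below A leA (fst ` set (\<pi> @ map (\<lambda>a. (a, b)) \<sigma>))) leA)
       extends1 C' [a]"
    "wo_rank_le (mot B leB) (bad_seqs B leB) extends1 D' (\<beta> @ [b, b'])"
proof -
  let ?\<pi> = "\<pi> @ map (\<lambda>a. (a, b)) \<sigma>"
  obtain \<beta>' where \<beta>': "\<beta>' \<in> bad_seqs B leB" "extends1 (\<beta> @ [b]) \<beta>'"
    "wo_rank_le (mot B leB) (bad_seqs B leB) extends1 D' \<beta>'"
    using wo_rank_leD[OF D D'] by blast
  then obtain b' where b': "\<beta>' = \<beta> @ [b, b']" unfolding extends1_def by auto
  have "finite (fst ` set ?\<pi>)" "fst ` set ?\<pi> \<subseteq> A"
    using lay unfolding layered_def antichain_seqs_def by auto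
  then obtain a where a: "a \<in> not_below A leA (fst ` set ?\<pi>)"
    "wo_rank_le (width A leA) (antichain_seqs (not_below A leA (fst ` set ?\<pi>)) leA) extends1 C' [a]"
    using transferable_wo_rank_le_singleton[OF wqo transferable _ _ C'] by blast
  show thesis
    using that[OF layered_open_column[OF lay] a(2)] \<beta>' b' a(1) by simp
qed

lemma layered_wo_rank_le:
  assumes wqoA: "wqo_on A leA" and transferable: "transferable A leA" and wqoB: "wqo_on B leB"
    and "layered A leA B leB \<pi> \<sigma> \<beta> b"
    and "wo_rank_le (width A leA) (antichain_seqs (not_below A leA (fst ` set \<pi>)) leA) extends1 (fst x) \<sigma>"
    and "wo_rank_le (mot B leB) (bad_seqs B leB) extends1 (snd x) (\<beta> @ [b])"
  shows "wo_rank_le (ord_mult (width A leA) (mot B leB)) (antichain_seqs (A \<times> B) (prod_le leA leB))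
    extends1 x (\<pi> @ map (\<lambda>a. (a, b)) \<sigma>)"
proof -
  let ?r = "ord_mult (width A leA) (mot B leB)"
  let ?N = "antichain_seqs (A \<times> B) (prod_le leA leB)"
  have wf: "wf (?r - Id)"
    using Well_order_ord_mult[OF Well_order_width[OF wqoA] Well_order_mot[OF wqoB]]
    unfolding well_order_on_def ..
  show ?thesis
    using assms(4-6)
  proof (induction x arbitrary: \<pi> \<sigma> \<beta> b rule: wf_induct_rule[OF wf])
    case (1 x)
    let ?\<pi> = "\<pi> @ map (\<lambda>a. (a, b)) \<sigma>"
    have "\<exists>t. t \<in> ?N \<and> extends1 ?\<pi> t \<and> wo_rank_le ?r ?N extends1 y t" if y: "(y, x) \<in> ?r - Id" for y
    proof -
      consider "snd y = snd x" "(fst y, fst x) \<in> width A leA" "fst y \<noteq> fst x"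
        | "(snd y, snd x) \<in> mot B leB" "snd y \<noteq> snd x" "fst y \<in> Field (width A leA)"
        using y unfolding ord_mult_def by (cases x, cases y) auto
      then show ?thesis
      proof cases
        case 1
        then obtain a where lay: "layered A leA B leB \<pi> (\<sigma> @ [a]) \<beta> b" and
          "wo_rank_le (width A leA) (antichain_seqs (not_below A leA (fst ` set \<pi>)) leA) extends1
             (fst y) (\<sigma> @ [a])"
          using layered_extend_column[OF "1.prems"(1,2)] by blast
        then have "wo_rank_le ?r ?N extends1 y (?\<pi> @ [(a, b)])"
          using "1.IH"[OF y lay] "1.prems"(3) 1(1) by simp
        moreover have "?\<pi> @ [(a, b)] \<in> ?N" using lay unfolding layered_def by simp
        ultimately show ?thesis by (auto simp: extends1_def)
      next
        case 2
        then obtain a b' where lay: "layered A leA B leB ?\<pi> [a] (\<beta> @ [b]) b'" and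
          "wo_rank_le (width A leA) (antichain_seqs (not_below A leA (fst ` set ?\<pi>)) leA) extends1
             (fst y) [a]"
          "wo_rank_le (mot B leB) (bad_seqs B leB) extends1 (snd y) (\<beta> @ [b, b'])"
          using layered_new_column[OF wqoA transferable "1.prems"(1,3)] by blast
        then have "wo_rank_le ?r ?N extends1 y (?\<pi> @ [(a, b')])"
          using "1.IH"[OF y lay] by simp
        moreover have "?\<pi> @ [(a, b')] \<in> ?N" using lay unfolding layered_def by simp
        ultimately show ?thesis by (auto simp: extends1_def)
      qed
    qed
    then show ?case
      using "1.prems"(1) unfolding layered_def by (blast intro: wo_rank_le.intros)
  qed
qed

lemma ord_mult_wo_rank_le_antichain:
  assumes wqoA: "wqo_on A leA" and transferable: "transferable A leA" and wqoB: "wqo_on B leB"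
    and x: "x \<in> Field (ord_mult (width A leA) (mot B leB))"
  obtains \<pi> where "wo_rank_le (ord_mult (width A leA) (mot B leB))
    (antichain_seqs (A \<times> B) (prod_le leA leB)) extends1 x \<pi>"
proof -
  interpret A: wf_forest "antichain_seqs A leA" extends1
    using wf_forest_antichain_seqs[OF wqoA] .
  interpret B: wf_forest "bad_seqs B leB" extends1
    using wf_forest_bad_seqs[OF wqoB] .
  have "fst x \<in> Field (width A leA)" "snd x \<in> Field (mot B leB)"
    using x Field_ord_mult_subset by fastforce+
  then obtain \<sigma> \<beta> where \<sigma>: "\<sigma> \<in> antichain_seqs A leA"
      "wo_rank_le (width A leA) (antichain_seqs A leA) extends1 (fst x) \<sigma>"
    and \<beta>: "\<beta> \<in> bad_seqs B leB" "wo_rank_le (mot B leB) (bad_seqs B leB) extends1 (snd x) \<beta>"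
    unfolding width_def mot_def using A.wo_rank_le_node_exists B.wo_rank_le_node_exists by metis
  have \<beta>_snoc: "\<beta> = butlast \<beta> @ [last \<beta>]" "last \<beta> \<in> B"
    using \<beta>(1) unfolding bad_seqs_def by auto
  have "layered A leA B leB [] \<sigma> (butlast \<beta>) (last \<beta>)"
    using layered_init \<sigma>(1) \<beta>(1) \<beta>_snoc wqo_on_refl[OF wqoB] by metis
  moreover have "not_below A leA (fst ` set []) = A" unfolding not_below_def by simp
  ultimately show thesis
    using that layered_wo_rank_le[OF wqoA transferable wqoB] \<sigma>(2) \<beta>(2) \<beta>_snoc by (metis append_Nil)
qed

theorem mainTheorem5:
  fixes A :: "'a set" and leA :: "'a \<Rightarrow> 'a \<Rightarrow> bool"
    and B :: "'b set" and leB :: "'b \<Rightarrow> 'b \<Rightarrow> bool"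
  assumes "wqo_on A leA" and "transferable A leA" and "wqo_on B leB"
  shows "(ord_mult (width A leA) (mot B leB), width (A \<times> B) (prod_le leA leB)) \<in> ordLeq"
proof -
  interpret AB: wf_forest "antichain_seqs (A \<times> B) (prod_le leA leB)" extends1
    using wf_forest_antichain_seqs[OF wqo_on_prod[OF assms(1,3)]] .
  have "Well_order (ord_mult (width A leA) (mot B leB))"
    using Well_order_ord_mult Well_order_width Well_order_mot assms(1,3) by blast
  then show ?thesis
    unfolding width_def[of "A \<times> B"]
    using AB.ordLeq_forest_inv ord_mult_wo_rank_le_antichain[OF assms] by blast
qed

end
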